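(* Let $\alpha,\beta,r:\mathbb{Z}\to\mathbb{R}$ with $\beta(t)\neq0$ for all $t\in\mathbb{Z}$, and fix $a\in\mathbb{Z}$. Let $y_1,y_2$ satisfy $y_i(t+2)+\alpha(t)y_i(t+1)+\beta(t)y_i(t)=0$ ($i=1,2$) with $W(t):=y_1(t)y_2(t+1)-y_2(t)y_1(t+1)\neq0$. Then the general solution of $$y(t+2)+\alpha(t)y(t+1)+\beta(t)y(t)=r(t),\qquad t\in\mathbb{Z},$$ is $$y(t)=c_1y_1(t)+c_2y_2(t)+y_1(t)\sum\frac{\prod_{j=a}^{t-1}\beta(j)\sum\frac{r(t)y_1(t+1)}{\prod_{j=a}^{t}\beta(j)}}{y_1(t)y_1(t+1)}$$ or $$y(t)=c_1y_1(t)+c_2y_2(t)+y_2(t)\sum\frac{\prod_{j=a}^{t-1}\beta(j)\sum\frac{r(t)y_2(t+1)}{\prod_{j=a}^{t}\beta(j)}}{y_2(t)y_2(t+1)},$$ where $c_1,c_2$ are arbitrary constants.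
   Context: $\sum f(t)$ denotes an indefinite sum with respect to $t$, i.e. any function $F$ with $F(t+1)-F(t)=f(t)$. *)

theory Defs
  imports Complex_Main
begin

definition lin_diff_sol :: "(int \<Rightarrow> real) \<Rightarrow> (int \<Rightarrow> real) \<Rightarrow> (int \<Rightarrow> real) \<Rightarrow> (int \<Rightarrow> real) \<Rightarrow> bool" where
  "lin_diff_sol \<alpha> \<beta> r y \<longleftrightarrow> (\<forall>t. y (t + 2) + \<alpha> t * y (t + 1) + \<beta> t * y t = r t)"

definition indef_sum :: "(int \<Rightarrow> real) \<Rightarrow> (int \<Rightarrow> real) \<Rightarrow> bool" where
  "indef_sum f F \<longleftrightarrow> (\<forall>t. F (t + 1) - F t = f t)"

text \<open>Discrete product prod_{j=a}^{t-1} beta(j), with the standard convention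
  for t < a: it equals 1 / prod_{j=t}^{a-1} beta(j); so dprod beta a a = 1 and
  dprod beta a (t+1) = beta t * dprod beta a t for all t.\<close>
definition dprod :: "(int \<Rightarrow> real) \<Rightarrow> int \<Rightarrow> int \<Rightarrow> real" where
  "dprod \<beta> a t = (if a \<le> t then (\<Prod>j\<in>{a..<t}. \<beta> j) else 1 / (\<Prod>j\<in>{t..<a}. \<beta> j))"

end

theory Submission
  imports Defs
begin

text \<open>Reduction of order. If z is a nowhere vanishing homogeneous solution, substituting
  y = z u turns the equation into z(t+2) \<Delta>u(t+1) - \<beta>(t) z(t) \<Delta>u(t) = r(t), a first-order
  equation for \<Delta>u. Multiplying it by z(t+1) / P(t+1), where P(t+1) = \<beta>(t) P(t), makes
  the left-hand side the difference of H(t) = \<Delta>u(t) z(t) z(t+1) / P(t); summing twice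
  recovers u.\<close>

lemma dprod_Suc:
  assumes "\<forall>t. \<beta> t \<noteq> 0"
  shows "dprod \<beta> a (t + 1) = \<beta> t * dprod \<beta> a t"
proof (cases "a \<le> t")
  case True
  then have "{a..<t+1} = insert t {a..<t}" by auto
  with True show ?thesis by (simp add: dprod_def mult.commute)
next
  case False
  show ?thesis
  proof (cases "a = t + 1")
    case True
    moreover have "{t..<t+1} = {t}" by auto
    ultimately show ?thesis using assms by (simp add: dprod_def)
  next
    case False
    with \<open>\<not> a \<le> t\<close> have "{t..<a} = insert t {t+1..<a}" by auto
    with \<open>\<not> a \<le> t\<close> False assms show ?thesis by (simp add: dprod_def field_simps)
  qed
qed

lemma dprod_nonzero:
  assumes "\<forall>t. \<beta> t \<noteq> 0"
  shows "dprod \<beta> a t \<noteq> 0"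
  using assms by (simp add: dprod_def prod_zero_iff)

lemma lin_diff_sol_add_homogeneous_iff:
  assumes "lin_diff_sol \<alpha> \<beta> (\<lambda>_. 0) y1" "lin_diff_sol \<alpha> \<beta> (\<lambda>_. 0) y2"
  shows "lin_diff_sol \<alpha> \<beta> r (\<lambda>t. c1 * y1 t + c2 * y2 t + w t) \<longleftrightarrow> lin_diff_sol \<alpha> \<beta> r w"
proof -
  have "(c1 * y1 (t+2) + c2 * y2 (t+2) + w (t+2)) + \<alpha> t * (c1 * y1 (t+1) + c2 * y2 (t+1) + w (t+1))
      + \<beta> t * (c1 * y1 t + c2 * y2 t + w t)
    = w (t+2) + \<alpha> t * w (t+1) + \<beta> t * w t
      + c1 * (y1 (t+2) + \<alpha> t * y1 (t+1) + \<beta> t * y1 t)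
      + c2 * (y2 (t+2) + \<alpha> t * y2 (t+1) + \<beta> t * y2 t)" for t
    by (simp add: algebra_simps)
  also have "\<dots> t = w (t+2) + \<alpha> t * w (t+1) + \<beta> t * w t" for t
    using assms unfolding lin_diff_sol_def by simp
  finally have combination: "\<And>t. (c1 * y1 (t+2) + c2 * y2 (t+2) + w (t+2))
      + \<alpha> t * (c1 * y1 (t+1) + c2 * y2 (t+1) + w (t+1)) + \<beta> t * (c1 * y1 t + c2 * y2 t + w t)
    = w (t+2) + \<alpha> t * w (t+1) + \<beta> t * w t" .
  show ?thesis unfolding lin_diff_sol_def by (simp only: combination)
qed

lemma lin_diff_sol_mult_homogeneous_iff:
  assumes "lin_diff_sol \<alpha> \<beta> (\<lambda>_. 0) z"
  shows "lin_diff_sol \<alpha> \<beta> r (\<lambda>t. z t * u t) \<longleftrightarrow>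
    (\<forall>t. z (t+2) * (u (t+2) - u (t+1)) - \<beta> t * z t * (u (t+1) - u t) = r t)"
proof -
  have hom_step: "z (t+2) = - \<alpha> t * z (t+1) - \<beta> t * z t" for t
  proof -
    have "z (t+2) + \<alpha> t * z (t+1) + \<beta> t * z t = 0"
      using assms unfolding lin_diff_sol_def by simp
    then show ?thesis by linarith
  qed
  have "z (t+2) * u (t+2) + \<alpha> t * (z (t+1) * u (t+1)) + \<beta> t * (z t * u t)
      = z (t+2) * (u (t+2) - u (t+1)) - \<beta> t * z t * (u (t+1) - u t)" for t
    unfolding hom_step[of t] by (simp add: algebra_simps)
  then show ?thesis unfolding lin_diff_sol_def by simp
qed

lemma first_order_iff_indef_sum:
  fixes \<beta> z v P r :: "int \<Rightarrow> real"
  assumes z: "\<And>t. z t \<noteq> 0"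
    and P_Suc: "\<And>t. P (t + 1) = \<beta> t * P t" and P: "\<And>t. P t \<noteq> 0"
  shows "(\<forall>t. z (t+2) * v (t+1) - \<beta> t * z t * v t = r t) \<longleftrightarrow>
    indef_sum (\<lambda>t. r t * z (t + 1) / P (t + 1)) (\<lambda>t. v t * z t * z (t + 1) / P t)"
proof -
  have "v (t+1) * z (t+1) * z (t+1+1) / P (t+1) - v t * z t * z (t+1) / P t
      = (z (t+2) * v (t+1) - \<beta> t * z t * v t) * z (t+1) / P (t+1)" for t
  proof -
    have "\<beta> t \<noteq> 0" using P[of "t+1"] P_Suc[of t] by auto
    moreover have "t + 1 + 1 = t + 2" by simp
    ultimately show ?thesis using P[of t] P_Suc[of t] by (simp add: field_simps)
  qed
  moreover have "a * z (t+1) / P (t+1) = b * z (t+1) / P (t+1) \<longleftrightarrow> a = b" for a b t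
    using z[of "t+1"] P[of "t+1"] by (simp add: field_simps)
  ultimately show ?thesis unfolding indef_sum_def by auto
qed

lemma lin_diff_sol_mult_homogeneous_iff_indef_sums:
  fixes \<alpha> \<beta> r z u P :: "int \<Rightarrow> real"
  assumes hom: "lin_diff_sol \<alpha> \<beta> (\<lambda>_. 0) z" and z: "\<And>t. z t \<noteq> 0"
    and P_Suc: "\<And>t. P (t + 1) = \<beta> t * P t" and P: "\<And>t. P t \<noteq> 0"
  shows "lin_diff_sol \<alpha> \<beta> r (\<lambda>t. z t * u t) \<longleftrightarrow>
    (\<exists>H. indef_sum (\<lambda>t. r t * z (t + 1) / P (t + 1)) H \<and>
         indef_sum (\<lambda>t. P t * H t / (z t * z (t + 1))) u)"
proof -
  define H where "H t = (u (t+1) - u t) * z t * z (t + 1) / P t" for t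
  have t2: "t + 1 + 1 = t + 2" for t :: int by simp
  have "lin_diff_sol \<alpha> \<beta> r (\<lambda>t. z t * u t) \<longleftrightarrow>
      indef_sum (\<lambda>t. r t * z (t + 1) / P (t + 1)) H"
    unfolding lin_diff_sol_mult_homogeneous_iff[OF hom] H_def
    using first_order_iff_indef_sum[where z = z and P = P and \<beta> = \<beta> and v = "\<lambda>t. u (t+1) - u t",
      OF z P_Suc P] by (simp add: t2)
  moreover have "indef_sum (\<lambda>t. P t * G t / (z t * z (t + 1))) u \<longleftrightarrow> G = H" for G
  proof -
    have "u (t+1) - u t = P t * G t / (z t * z (t + 1)) \<longleftrightarrow> G t = H t" for t
      using z[of t] z[of "t+1"] P[of t] unfolding H_def by (auto simp: field_simps)
    then show ?thesis unfolding indef_sum_def by auto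
  qed
  ultimately show ?thesis by auto
qed

lemma lin_diff_sol_iff_reduction_of_order:
  fixes \<alpha> \<beta> r y1 y2 z :: "int \<Rightarrow> real" and a :: int
  assumes \<beta>: "\<forall>t. \<beta> t \<noteq> 0"
    and y1: "lin_diff_sol \<alpha> \<beta> (\<lambda>_. 0) y1" and y2: "lin_diff_sol \<alpha> \<beta> (\<lambda>_. 0) y2"
    and hom: "lin_diff_sol \<alpha> \<beta> (\<lambda>_. 0) z" and z: "\<forall>t. z t \<noteq> 0"
  shows "lin_diff_sol \<alpha> \<beta> r y \<longleftrightarrow>
    (\<exists>c1 c2 H G.
       indef_sum (\<lambda>t. r t * z (t + 1) / dprod \<beta> a (t + 1)) H \<and>
       indef_sum (\<lambda>t. dprod \<beta> a t * H t / (z t * z (t + 1))) G \<and>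
       (\<forall>t. y t = c1 * y1 t + c2 * y2 t + z t * G t))"
proof -
  note sums_iff = lin_diff_sol_mult_homogeneous_iff_indef_sums
    [where r = r, OF hom _ dprod_Suc[OF \<beta>, of a] dprod_nonzero[OF \<beta>, of a]]
  show ?thesis
  proof
    assume "lin_diff_sol \<alpha> \<beta> r y"
    moreover have "y = (\<lambda>t. z t * (y t / z t))" using z by auto
    ultimately obtain H where
      "indef_sum (\<lambda>t. r t * z (t + 1) / dprod \<beta> a (t + 1)) H"
      "indef_sum (\<lambda>t. dprod \<beta> a t * H t / (z t * z (t + 1))) (\<lambda>t. y t / z t)"
      using sums_iff[where u = "\<lambda>t. y t / z t"] z by auto
    moreover have "\<forall>t. y t = 0 * y1 t + 0 * y2 t + z t * (y t / z t)" using z by simp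
    ultimately show "\<exists>c1 c2 H G.
       indef_sum (\<lambda>t. r t * z (t + 1) / dprod \<beta> a (t + 1)) H \<and>
       indef_sum (\<lambda>t. dprod \<beta> a t * H t / (z t * z (t + 1))) G \<and>
       (\<forall>t. y t = c1 * y1 t + c2 * y2 t + z t * G t)" by blast
  next
    assume "\<exists>c1 c2 H G.
       indef_sum (\<lambda>t. r t * z (t + 1) / dprod \<beta> a (t + 1)) H \<and>
       indef_sum (\<lambda>t. dprod \<beta> a t * H t / (z t * z (t + 1))) G \<and>
       (\<forall>t. y t = c1 * y1 t + c2 * y2 t + z t * G t)"
    then obtain c1 c2 H G where
      "indef_sum (\<lambda>t. r t * z (t + 1) / dprod \<beta> a (t + 1)) H"
      "indef_sum (\<lambda>t. dprod \<beta> a t * H t / (z t * z (t + 1))) G"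
      and y: "\<forall>t. y t = c1 * y1 t + c2 * y2 t + z t * G t" by blast
    then have "lin_diff_sol \<alpha> \<beta> r (\<lambda>t. z t * G t)"
      using sums_iff[where u = G] z by auto
    moreover from y have "y = (\<lambda>t. c1 * y1 t + c2 * y2 t + z t * G t)" by auto
    ultimately show "lin_diff_sol \<alpha> \<beta> r y"
      using lin_diff_sol_add_homogeneous_iff[OF y1 y2] by simp
  qed
qed

theorem theorem4p2:
  fixes \<alpha> \<beta> r y1 y2 :: "int \<Rightarrow> real" and a :: int
  assumes "\<forall>t. \<beta> t \<noteq> 0"
    and "lin_diff_sol \<alpha> \<beta> (\<lambda>_. 0) y1"
    and "lin_diff_sol \<alpha> \<beta> (\<lambda>_. 0) y2"
    and "\<forall>t. y1 t * y2 (t + 1) - y2 t * y1 (t + 1) \<noteq> 0"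
  shows "((\<forall>t. y1 t \<noteq> 0) \<longrightarrow>
           (\<forall>y. lin_diff_sol \<alpha> \<beta> r y \<longleftrightarrow>
              (\<exists>c1 c2 H G.
                 indef_sum (\<lambda>t. r t * y1 (t + 1) / dprod \<beta> a (t + 1)) H \<and>
                 indef_sum (\<lambda>t. dprod \<beta> a t * H t / (y1 t * y1 (t + 1))) G \<and>
                 (\<forall>t. y t = c1 * y1 t + c2 * y2 t + y1 t * G t))))
       \<and> ((\<forall>t. y2 t \<noteq> 0) \<longrightarrow>
           (\<forall>y. lin_diff_sol \<alpha> \<beta> r y \<longleftrightarrow>
              (\<exists>c1 c2 H G.
                 indef_sum (\<lambda>t. r t * y2 (t + 1) / dprod \<beta> a (t + 1)) H \<and>
                 indef_sum (\<lambda>t. dprod \<beta> a t * H t / (y2 t * y2 (t + 1))) G \<and>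
                 (\<forall>t. y t = c1 * y1 t + c2 * y2 t + y2 t * G t))))"
  using lin_diff_sol_iff_reduction_of_order[OF assms(1,2,3,2)]
    lin_diff_sol_iff_reduction_of_order[OF assms(1,2,3,3)] by blast

end
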